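(* Fix a positive integer $n$ and two partitions $\Lambda_w$ and $\Lambda_b$ of $n$. Then $$\sum_{T\in\mathbf{W}_{\Lambda_w,\Lambda_b}}\varepsilon(T)-\sum_{T\in\mathbf{B}_{\Lambda_w,\Lambda_b}}\varepsilon(T)=0.$$
   Context: A black and white tree is a finite tree embedded in $\mathbb{C}$ whose vertices are colored black and white so that adjacent vertices have different colors. It is real if it is invariant (including colors) under complex conjugation. Two real black and white trees are isomorphic if one is carried to the other by a homeomorphism of $\mathbb{C}$ commuting with complex conjugation, preserving the orientation of the real axis (and preserving the trees with their colors); trees are considered up to isomorphism. The real vertices of a real tree $T$ are its vertices on $\mathbb{R}$, ordered from left to right. A disorder of $T$ is a pair of real vertices of the same color such that the left one has strictly greater degree than the right one. The sign is $\varepsilon(T)=(-1)^d$, $d$ the number of disorders. $T$ is a white side (resp. black side) tree if its rightmost real vertex is white (resp. black). $\mathbf{W}_{\Lambda_w,\Lambda_b}$ (resp. $\mathbf{B}_{\Lambda_w,\Lambda_b}$) denotes the set of isomorphism classes of white side (resp. black side) real black and white trees whose white vertex degrees form the partition $\Lambda_w$ and black vertex degrees form $\Lambda_b$. *)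

theory Defs
  imports Main "HOL-Library.Multiset"
begin

text \<open>Combinatorial model of isomorphism classes of real black and white trees.
A real tree meets the real axis in a path of real vertices v_0 < ... < v_(k-1)
(consecutive ones joined by real edges, colours alternating). Everything else
lies in the open upper half plane and its mirror image. At each real vertex the
edges going into the upper half plane are linearly ordered (by angle from the
positive to the negative real direction), and each carries a planted plane tree.
Hence an isomorphism class is encoded by the colour of the leftmost real vertex
(True = white) and, for each real vertex from left to right, the ordered list
of plane rooted trees hanging into the upper half plane.\<close>

datatype ptree = Node "ptree list"

text \<open>Colour/degree pairs of the non-real vertices of a planted tree whose root
has colour x (the root also has its edge to the parent).\<close>
fun pdegs :: "bool \<Rightarrow> ptree \<Rightarrow> (bool \<times> nat) multiset" where
  "pdegs x (Node ts) = {#(x, Suc (length ts))#} + sum_list (map (pdegs (\<not> x)) ts)"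

type_synonym rtree = "bool \<times> ptree list list"

fun rt_valid :: "rtree \<Rightarrow> bool" where
  "rt_valid (c, vs) = (vs \<noteq> [])"

definition rcol :: "bool \<Rightarrow> nat \<Rightarrow> bool" where
  "rcol c i = (if even i then c else \<not> c)"

text \<open>degree of the i-th real vertex: real edges plus upper edges and their mirrors\<close>
definition rdeg :: "ptree list list \<Rightarrow> nat \<Rightarrow> nat" where
  "rdeg vs i = 2 * length (vs ! i) + (if 0 < i then 1 else 0)
               + (if Suc i < length vs then 1 else 0)"

text \<open>multiset of (colour, degree) over all vertices; non-real vertices come in
conjugate pairs, hence are counted twice\<close>
fun all_degs :: "rtree \<Rightarrow> (bool \<times> nat) multiset" where
  "all_degs (c, vs) =
     mset (map (\<lambda>i. (rcol c i, rdeg vs i)) [0..<length vs])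
     + sum_list (map (\<lambda>i. sum_list (map (\<lambda>t. pdegs (\<not> rcol c i) t + pdegs (\<not> rcol c i) t) (vs ! i)))
                     [0..<length vs])"

definition white_degs :: "rtree \<Rightarrow> nat multiset" where
  "white_degs T = image_mset snd (filter_mset fst (all_degs T))"

definition black_degs :: "rtree \<Rightarrow> nat multiset" where
  "black_degs T = image_mset snd (filter_mset (\<lambda>p. \<not> fst p) (all_degs T))"

fun disorders :: "rtree \<Rightarrow> nat" where
  "disorders (c, vs) = card {(i, j). i < j \<and> j < length vs \<and> rcol c i = rcol c j
                                    \<and> rdeg vs j < rdeg vs i}"

definition tsign :: "rtree \<Rightarrow> int" where
  "tsign T = (-1) ^ disorders T"

fun white_side :: "rtree \<Rightarrow> bool" where
  "white_side (c, vs) = rcol c (length vs - 1)"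

definition Wtrees :: "nat multiset \<Rightarrow> nat multiset \<Rightarrow> rtree set" where
  "Wtrees Lw Lb = {T. rt_valid T \<and> white_side T \<and> white_degs T = Lw \<and> black_degs T = Lb}"

definition Btrees :: "nat multiset \<Rightarrow> nat multiset \<Rightarrow> rtree set" where
  "Btrees Lw Lb = {T. rt_valid T \<and> \<not> white_side T \<and> white_degs T = Lw \<and> black_degs T = Lb}"

end

theory Submission
  imports Defs "HOL-Library.Disjoint_Sets"
begin

(*
  Weight each tree by its sign, negated for black side trees; the claim is that the total weight
  of the trees with the given degrees vanishes. We construct an involution on these trees which
  preserves all degrees and reverses the weight. Write f0, M, fl for the forests above the left
  end, the inner vertices and the right end of the real path.

  If the path has an even number of vertices, exchanging f0 and fl and swapping the inner forests
  in adjacent pairs keeps the colours and the sign but changes the side. If the number is odd and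
  the ends have different degrees, exchanging f0 and fl changes the sign only. Otherwise the inner
  vertices, except a middle one, are grouped into pairs of vertices two places apart, hence of the
  same colour. At the first pair of different degrees, re-splitting the concatenated forests
  exchanges the two degrees: a transposition of neighbours among the same-coloured real degrees,
  which changes the sign. If all pairs have equal degrees, the tree is folded into a tree with one
  real vertex, the pairs becoming a chain of non-real vertices that carries f0 @ fl at its bottom;
  this reverses the weight, and unfolding is the involution on one-vertex trees. The tree without
  edges is excluded by n > 0.
*)

section \<open>Disorders of colour-degree sequences\<close>

definition count_below :: "bool \<times> nat \<Rightarrow> (bool \<times> nat) list \<Rightarrow> nat" where
  "count_below x ys = length (filter (\<lambda>y. fst x = fst y \<and> snd y < snd x) ys)"

fun disorders_seq :: "(bool \<times> nat) list \<Rightarrow> nat" where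
  "disorders_seq [] = 0"
| "disorders_seq (x # xs) = count_below x xs + disorders_seq xs"

definition cross_disorders :: "(bool \<times> nat) list \<Rightarrow> (bool \<times> nat) list \<Rightarrow> nat" where
  "cross_disorders xs ys = (\<Sum>x\<leftarrow>xs. count_below x ys)"

lemma count_below_Nil [simp]: "count_below x [] = 0"
  by (simp add: count_below_def)

lemma count_below_Cons:
  "count_below x (y # ys) = (if fst x = fst y \<and> snd y < snd x then 1 else 0) + count_below x ys"
  by (simp add: count_below_def)

lemma count_below_append [simp]: "count_below x (ys @ zs) = count_below x ys + count_below x zs"
  by (simp add: count_below_def)

lemma cross_disorders_Nil [simp]: "cross_disorders [] ys = 0"
  by (simp add: cross_disorders_def)

lemma cross_disorders_Cons [simp]:
  "cross_disorders (x # xs) ys = count_below x ys + cross_disorders xs ys"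
  by (simp add: cross_disorders_def)

lemma disorders_seq_append:
  "disorders_seq (xs @ ys) = disorders_seq xs + disorders_seq ys + cross_disorders xs ys"
  by (induction xs) auto

lemma count_below_mset: "mset ys = mset ys' \<Longrightarrow> count_below x ys = count_below x ys'"
  by (metis count_below_def mset_filter size_mset)

lemma cross_disorders_mset:
  assumes "mset xs = mset xs'" and "mset ys = mset ys'"
  shows "cross_disorders xs ys = cross_disorders xs' ys'"
proof -
  have "cross_disorders xs ys = (\<Sum>x\<leftarrow>xs. count_below x ys')"
    unfolding cross_disorders_def using count_below_mset[OF assms(2)] by simp
  also have "\<dots> = (\<Sum>x\<leftarrow>xs'. count_below x ys')"
    by (metis assms(1) mset_map sum_mset_sum_list)
  finally show ?thesis
    unfolding cross_disorders_def .
qed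

lemma card_ordered_pairs_Cons:
  "card {(i, j). i < j \<and> j < length (x # xs) \<and> P ((x # xs) ! i) ((x # xs) ! j)}
   = length (filter (P x) xs) + card {(i, j). i < j \<and> j < length xs \<and> P (xs ! i) (xs ! j)}"
  (is "card ?S' = _ + card ?S")
proof -
  let ?A = "(\<lambda>j. (0, Suc j)) ` {j. j < length xs \<and> P x (xs ! j)}"
  have split: "?S' = ?A \<union> map_prod Suc Suc ` ?S"
  proof (intro equalityI subsetI)
    fix ij assume "ij \<in> ?S'"
    then obtain i j where ij: "ij = (i, j)" "i < j" "j < Suc (length xs)" "P ((x # xs) ! i) ((x # xs) ! j)"
      by auto
    show "ij \<in> ?A \<union> map_prod Suc Suc ` ?S"
    proof (cases i)
      case 0
      with ij obtain j' where "j = Suc j'" by (cases j) auto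
      with ij 0 show ?thesis by auto
    next
      case (Suc i')
      with ij obtain j' where "j = Suc j'" by (cases j) auto
      with ij Suc have "(i', j') \<in> ?S" "ij = map_prod Suc Suc (i', j')" by auto
      then show ?thesis by blast
    qed
  qed auto
  moreover have "finite ?S"
    by (rule finite_subset[of _ "{..<length xs} \<times> {..<length xs}"]) auto
  moreover have "card ?A = length (filter (P x) xs)"
    by (simp add: card_image inj_on_def length_filter_conv_card)
  moreover have "card (map_prod Suc Suc ` ?S) = card ?S"
    by (simp add: card_image inj_on_def)
  ultimately show ?thesis
    unfolding split by (subst card_Un_disjoint) auto
qed

lemma card_disorder_pairs:
  "card {(i, j). i < j \<and> j < length xs \<and> fst (xs ! i) = fst (xs ! j) \<and> snd (xs ! j) < snd (xs ! i)}
   = disorders_seq xs"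
proof (induction xs)
  case (Cons x xs)
  have "card {(i, j). i < j \<and> j < length (x # xs) \<and> fst ((x # xs) ! i) = fst ((x # xs) ! j)
               \<and> snd ((x # xs) ! j) < snd ((x # xs) ! i)}
        = count_below x xs + card {(i, j). i < j \<and> j < length xs \<and> fst (xs ! i) = fst (xs ! j)
               \<and> snd (xs ! j) < snd (xs ! i)}"
    unfolding count_below_def
    by (rule card_ordered_pairs_Cons[where P = "\<lambda>a b. fst a = fst b \<and> snd b < snd a"])
  then show ?case
    using Cons.IH by simp
qed simp

lemma count_below_add_cross_disorders:
  assumes "\<forall>z\<in>set zs. fst z = fst x \<longrightarrow> snd z \<noteq> snd x"
  shows "count_below x zs + cross_disorders zs [x] = length (filter (\<lambda>z. fst z = fst x) zs)"
  using assms by (induction zs) (auto simp: count_below_Cons)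

lemma disorders_seq_Cons_snoc:
  "disorders_seq (p # zs @ [q])
   = count_below p zs + count_below p [q] + disorders_seq zs + cross_disorders zs [q]"
  by (simp add: disorders_seq_append)

lemma disorders_seq_Cons_snoc_cong:
  assumes "mset zs' = mset zs" and "disorders_seq zs' = disorders_seq zs"
  shows "disorders_seq (p # zs' @ [q]) = disorders_seq (p # zs @ [q])"
  unfolding disorders_seq_Cons_snoc
  using assms count_below_mset[OF assms(1)] cross_disorders_mset[OF assms(1)] by simp

lemma disorders_seq_swap_ends_same_colour:
  assumes "fst p = fst q" and "snd p \<noteq> snd q"
    and "\<forall>z\<in>set zs. fst z = fst p \<longrightarrow> snd z \<noteq> snd p \<and> snd z \<noteq> snd q"
  shows "odd (disorders_seq (p # zs @ [q]) + disorders_seq (q # zs @ [p]))"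
proof -
  let ?n = "length (filter (\<lambda>z. fst z = fst p) zs)"
  have "count_below p zs + cross_disorders zs [p] = ?n"
    using assms(3) by (intro count_below_add_cross_disorders) auto
  moreover have "count_below q zs + cross_disorders zs [q] = ?n"
    using assms(1,3) count_below_add_cross_disorders[of zs q] by auto
  moreover have "count_below p [q] + count_below q [p] = 1"
    using assms(1,2) by (auto simp: count_below_Cons)
  ultimately show ?thesis
    unfolding disorders_seq_Cons_snoc by presburger
qed

lemma disorders_seq_swap_ends_other_colour:
  assumes "fst p \<noteq> fst q" and "\<forall>z\<in>set zs. snd z \<noteq> snd p \<and> snd z \<noteq> snd q"
  shows "even (disorders_seq (p # zs @ [q]) + disorders_seq (q # zs @ [p]) + length zs)"
proof -
  have colour_q: "(\<lambda>z. fst z = fst q) = (\<lambda>z. \<not> fst z = fst p)"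
    using assms(1) by auto
  have "count_below p zs + cross_disorders zs [p] = length (filter (\<lambda>z. fst z = fst p) zs)"
    using assms(2) by (intro count_below_add_cross_disorders) auto
  moreover have "count_below q zs + cross_disorders zs [q] = length (filter (\<lambda>z. \<not> fst z = fst p) zs)"
    using assms(2) count_below_add_cross_disorders[of zs q] unfolding colour_q by auto
  moreover have "count_below p [q] = 0" and "count_below q [p] = 0"
    using assms(1) by (auto simp: count_below_Cons)
  ultimately show ?thesis
    using sum_length_filter_compl[of "\<lambda>z. fst z = fst p" zs]
    unfolding disorders_seq_Cons_snoc by presburger
qed

definition parity_swapped :: "(bool \<times> nat) list \<Rightarrow> (bool \<times> nat) list \<Rightarrow> bool" where
  "parity_swapped xs ys \<longleftrightarrow> mset xs = mset ys \<and> odd (disorders_seq xs + disorders_seq ys)"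

lemma parity_swapped_append_left:
  assumes "parity_swapped xs ys"
  shows "parity_swapped (zs @ xs) (zs @ ys)"
  using assms cross_disorders_mset[of zs zs xs ys]
  unfolding parity_swapped_def disorders_seq_append by auto

lemma parity_swapped_append_right:
  assumes "parity_swapped xs ys"
  shows "parity_swapped (xs @ zs) (ys @ zs)"
  using assms cross_disorders_mset[of xs ys zs zs]
  unfolding parity_swapped_def disorders_seq_append by auto

lemma parity_swapped_transpose:
  assumes "fst p = fst q" and "snd p \<noteq> snd q" and "fst r \<noteq> fst p"
  shows "parity_swapped (p # r # q # zs) (q # r # p # zs)"
proof -
  have "parity_swapped [p, r, q] [q, r, p]"
    using disorders_seq_swap_ends_same_colour[of p q "[r]"] assms
    by (simp add: parity_swapped_def add_mset_commute)
  then show ?thesis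
    using parity_swapped_append_right by fastforce
qed


section \<open>Degrees along the real axis\<close>

lemma rcol_Suc: "rcol c (Suc i) = rcol (\<not> c) i"
  by (simp add: rcol_def)

lemma rcol_0 [simp]: "rcol c 0 = c"
  by (simp add: rcol_def)

definition forest_degs :: "bool \<Rightarrow> ptree list \<Rightarrow> (bool \<times> nat) multiset" where
  "forest_degs x f = (\<Sum>t\<leftarrow>f. pdegs x t)"

definition vertex_degs :: "bool \<Rightarrow> nat \<Rightarrow> ptree list \<Rightarrow> (bool \<times> nat) multiset" where
  "vertex_degs y d f = add_mset (y, d) (forest_degs (\<not> y) f + forest_degs (\<not> y) f)"

abbreviation inner_degs :: "bool \<Rightarrow> ptree list \<Rightarrow> (bool \<times> nat) multiset" where
  "inner_degs y f \<equiv> vertex_degs y (2 * length f + 2) f"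

abbreviation end_degs :: "bool \<Rightarrow> ptree list \<Rightarrow> (bool \<times> nat) multiset" where
  "end_degs y f \<equiv> vertex_degs y (2 * length f + 1) f"

lemma forest_degs_Nil [simp]: "forest_degs x [] = {#}"
  by (simp add: forest_degs_def)

lemma forest_degs_Cons [simp]: "forest_degs x (t # f) = pdegs x t + forest_degs x f"
  by (simp add: forest_degs_def)

lemma forest_degs_append [simp]: "forest_degs x (f @ g) = forest_degs x f + forest_degs x g"
  by (simp add: forest_degs_def)

lemma pdegs_Node: "pdegs x (Node ts) = add_mset (x, Suc (length ts)) (forest_degs (\<not> x) ts)"
  by (simp add: forest_degs_def)

fun path_degs :: "bool \<Rightarrow> ptree list list \<Rightarrow> (bool \<times> nat) multiset" where
  "path_degs y [] = {#}"
| "path_degs y (f # fs) = inner_degs y f + path_degs (\<not> y) fs"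

fun inner_seq :: "bool \<Rightarrow> ptree list list \<Rightarrow> (bool \<times> nat) list" where
  "inner_seq y [] = []"
| "inner_seq y (f # fs) = (y, 2 * length f + 2) # inner_seq (\<not> y) fs"

fun real_seq :: "rtree \<Rightarrow> (bool \<times> nat) list" where
  "real_seq (c, vs) = map (\<lambda>i. (rcol c i, rdeg vs i)) [0..<length vs]"

lemma length_inner_seq [simp]: "length (inner_seq y M) = length M"
  by (induction M arbitrary: y) auto

lemma even_inner_seq: "z \<in> set (inner_seq y M) \<Longrightarrow> even (snd z)"
  by (induction M arbitrary: y) auto

lemma length_filter_inner_seq:
  "length (filter (\<lambda>z. fst z = x) (inner_seq y M))
   = (if x = y then (length M + 1) div 2 else length M div 2)"
  by (induction M arbitrary: y) auto

lemma tsign_eq: "tsign T = (-1) ^ disorders_seq (real_seq T)"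
proof (cases T)
  case (Pair c vs)
  have "disorders (c, vs) = card {(i, j). i < j \<and> j < length (real_seq (c, vs))
          \<and> fst (real_seq (c, vs) ! i) = fst (real_seq (c, vs) ! j)
          \<and> snd (real_seq (c, vs) ! j) < snd (real_seq (c, vs) ! i)}"
    by (auto intro!: arg_cong[where f = card])
  then show ?thesis
    using Pair by (simp only: tsign_def card_disorder_pairs)
qed

lemma all_degs_eq_sum_vertex_degs:
  "all_degs (c, vs) = (\<Sum>i\<leftarrow>[0..<length vs]. vertex_degs (rcol c i) (rdeg vs i) (vs ! i))"
proof -
  have sum_add_mset:
    "mset (map g ns) + (\<Sum>i\<leftarrow>ns. h i) = (\<Sum>i\<leftarrow>ns. add_mset (g i) (h i))" for g h
    and ns :: "nat list"
    by (induction ns) auto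
  have double: "forest_degs x f + forest_degs x f = (\<Sum>t\<leftarrow>f. pdegs x t + pdegs x t)" for x f
    by (simp add: forest_degs_def sum_list_addf)
  show ?thesis
    unfolding all_degs.simps vertex_degs_def double by (rule sum_add_mset)
qed

lemma map_upt_add_2: "map g [0..<n + 2] = g 0 # map (\<lambda>i. g (Suc i)) [0..<n] @ [g (Suc n)]"
proof -
  have "[0..<n + 2] = [0..<Suc n] @ [Suc n]"
    by simp
  then show ?thesis
    by (simp only: map_append map_upt_Suc) simp
qed

lemma path_degs_eq: "path_degs y M = (\<Sum>i\<leftarrow>[0..<length M]. inner_degs (rcol y i) (M ! i))"
  by (induction M arbitrary: y) (simp_all add: map_upt_Suc rcol_Suc del: upt_Suc)

lemma inner_seq_eq: "inner_seq y M = map (\<lambda>i. (rcol y i, 2 * length (M ! i) + 2)) [0..<length M]"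
  by (induction M arbitrary: y) (simp_all add: map_upt_Suc rcol_Suc del: upt_Suc)

lemma rdeg_path:
  shows "rdeg (f0 # M @ [fl]) 0 = 2 * length f0 + 1"
    and "i < length M \<Longrightarrow> rdeg (f0 # M @ [fl]) (Suc i) = 2 * length (M ! i) + 2"
    and "rdeg (f0 # M @ [fl]) (Suc (length M)) = 2 * length fl + 1"
  by (simp_all add: rdeg_def nth_append)

lemma all_degs_path:
  "all_degs (c, f0 # M @ [fl])
   = end_degs c f0 + path_degs (\<not> c) M + end_degs (rcol c (Suc (length M))) fl"
proof -
  let ?vs = "f0 # M @ [fl]"
  have "map (\<lambda>i. vertex_degs (rcol c (Suc i)) (rdeg ?vs (Suc i)) (?vs ! Suc i)) [0..<length M]
        = map (\<lambda>i. inner_degs (rcol (\<not> c) i) (M ! i)) [0..<length M]"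
    by (rule map_cong) (auto simp: rdeg_path rcol_Suc nth_append)
  moreover have "length ?vs = length M + 2"
    by simp
  ultimately show ?thesis
    unfolding all_degs_eq_sum_vertex_degs path_degs_eq
    by (simp only: map_upt_add_2) (simp add: rdeg_path)
qed

lemma real_seq_path:
  "real_seq (c, f0 # M @ [fl])
   = (c, 2 * length f0 + 1) # inner_seq (\<not> c) M @ [(rcol c (Suc (length M)), 2 * length fl + 1)]"
proof -
  let ?vs = "f0 # M @ [fl]"
  have "map (\<lambda>i. (rcol c (Suc i), rdeg ?vs (Suc i))) [0..<length M] = inner_seq (\<not> c) M"
    unfolding inner_seq_eq by (rule map_cong) (auto simp: rdeg_path rcol_Suc)
  moreover have "length ?vs = length M + 2"
    by simp
  ultimately show ?thesis
    unfolding real_seq.simps by (simp only: map_upt_add_2) (simp add: rdeg_path)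
qed

lemma all_degs_single: "all_degs (c, [f]) = vertex_degs c (2 * length f) f"
  unfolding all_degs_eq_sum_vertex_degs by (simp add: rdeg_def)

lemma real_seq_single: "real_seq (c, [f]) = [(c, 2 * length f)]"
  by (simp add: rdeg_def)

declare all_degs.simps [simp del] real_seq.simps [simp del]


section \<open>Finiteness\<close>

fun nodes :: "ptree \<Rightarrow> nat" where
  "nodes (Node ts) = Suc (\<Sum>t\<leftarrow>ts. nodes t)"

lemma nodes_pos: "0 < nodes t"
  by (cases t) simp

lemma nodes_le_sum_nodes: "t \<in> set ts \<Longrightarrow> nodes t \<le> (\<Sum>t\<leftarrow>ts. nodes t)"
  by (simp add: member_le_sum_list)

lemma length_le_sum_nodes: "length ts \<le> (\<Sum>t\<leftarrow>ts. nodes t)"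
proof (induction ts)
  case (Cons t ts)
  then show ?case
    using nodes_pos[of t] by simp
qed simp

lemma size_sum_list: "size (sum_list Ms) = (\<Sum>M\<leftarrow>Ms. size (M :: 'a multiset))"
  by (induction Ms) auto

lemma size_pdegs: "size (pdegs x t) = nodes t"
proof (induction t arbitrary: x)
  case (Node ts)
  have "(\<Sum>t\<leftarrow>ts. size (pdegs (\<not> x) t)) = (\<Sum>t\<leftarrow>ts. nodes t)"
    using Node.IH by (intro arg_cong[where f = sum_list] map_cong) auto
  then show ?case
    by (simp add: size_sum_list comp_def)
qed

lemma size_vertex_degs: "size (vertex_degs y d f) = Suc (2 * (\<Sum>t\<leftarrow>f. nodes t))"
  by (simp add: vertex_degs_def forest_degs_def size_sum_list size_pdegs comp_def)

lemma size_all_degs: "size (all_degs (c, vs)) = length vs + 2 * (\<Sum>f\<leftarrow>vs. \<Sum>t\<leftarrow>f. nodes t)"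
proof -
  have "size (all_degs (c, vs)) = (\<Sum>i\<leftarrow>[0..<length vs]. Suc (2 * (\<Sum>t\<leftarrow>vs ! i. nodes t)))"
    unfolding all_degs_eq_sum_vertex_degs by (simp add: size_sum_list size_vertex_degs comp_def)
  also have "\<dots> = (\<Sum>f\<leftarrow>vs. Suc (2 * (\<Sum>t\<leftarrow>f. nodes t)))"
    by (rule arg_cong[where f = sum_list], rule nth_equalityI) simp_all
  also have "\<dots> = length vs + 2 * (\<Sum>f\<leftarrow>vs. \<Sum>t\<leftarrow>f. nodes t)"
    by (simp add: sum_list_Suc sum_list_const_mult)
  finally show ?thesis .
qed

lemma rt_valid_iff_all_degs: "rt_valid T \<longleftrightarrow> all_degs T \<noteq> {#}"
  by (cases T) (simp flip: size_eq_0_iff_empty add: size_all_degs)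

lemma finite_nodes_le: "finite {t. nodes t \<le> N}"
proof (induction N)
  case 0
  have "{t. nodes t \<le> 0} = {}"
    using nodes_pos by (auto simp: le_zero_eq)
  then show ?case
    by (simp only: finite.emptyI)
next
  case (Suc N)
  have "{t. nodes t \<le> Suc N} \<subseteq> Node ` {ts. set ts \<subseteq> {t. nodes t \<le> N} \<and> length ts \<le> N}"
  proof
    fix t
    assume "t \<in> {t. nodes t \<le> Suc N}"
    moreover obtain ts where t: "t = Node ts"
      by (cases t)
    ultimately have le: "(\<Sum>t\<leftarrow>ts. nodes t) \<le> N"
      by simp
    then have "set ts \<subseteq> {t. nodes t \<le> N}"
      using nodes_le_sum_nodes[of _ ts] by force
    moreover have "length ts \<le> N"
      using le length_le_sum_nodes[of ts] by simp
    ultimately show "t \<in> Node ` {ts. set ts \<subseteq> {t. nodes t \<le> N} \<and> length ts \<le> N}"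
      using t by blast
  qed
  moreover have "finite (Node ` {ts. set ts \<subseteq> {t. nodes t \<le> N} \<and> length ts \<le> N})"
    using Suc.IH by (intro finite_imageI finite_lists_length_le)
  ultimately show ?case
    by (rule finite_subset)
qed

lemma size_white_degs_add_black_degs: "size (white_degs T) + size (black_degs T) = size (all_degs T)"
  unfolding white_degs_def black_degs_def by (metis multiset_partition size_image_mset size_union)

lemma finite_trees_with_degrees: "finite {T. white_degs T = Lw \<and> black_degs T = Lb}"
proof -
  define N where "N = size Lw + size Lb"
  define F where "F = {f. set f \<subseteq> {t. nodes t \<le> N} \<and> length f \<le> N}"
  have "T \<in> UNIV \<times> {vs. set vs \<subseteq> F \<and> length vs \<le> N}"
    if degs: "white_degs T = Lw" "black_degs T = Lb" for T
  proof (cases T)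
    case (Pair c vs)
    then have size: "length vs + 2 * (\<Sum>f\<leftarrow>vs. \<Sum>t\<leftarrow>f. nodes t) = N"
      using degs size_white_degs_add_black_degs[of T] size_all_degs[of c vs] by (simp add: N_def)
    have "f \<in> F" if f: "f \<in> set vs" for f
    proof -
      have le: "(\<Sum>t\<leftarrow>f. nodes t) \<le> N"
        using f size member_le_sum_list[of "\<Sum>t\<leftarrow>f. nodes t" "map (\<lambda>f. \<Sum>t\<leftarrow>f. nodes t) vs"]
        by simp
      then have "set f \<subseteq> {t. nodes t \<le> N}"
        using nodes_le_sum_nodes[of _ f] by force
      then show "f \<in> F"
        using le length_le_sum_nodes[of f] by (simp add: F_def)
    qed
    then show ?thesis
      using Pair size by auto
  qed
  then have "{T. white_degs T = Lw \<and> black_degs T = Lb} \<subseteq> UNIV \<times> {vs. set vs \<subseteq> F \<and> length vs \<le> N}"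
    by blast
  moreover have "finite F"
    unfolding F_def by (intro finite_lists_length_le finite_nodes_le)
  then have "finite ((UNIV :: bool set) \<times> {vs. set vs \<subseteq> F \<and> length vs \<le> N})"
    by (intro finite_cartesian_product finite_lists_length_le) (simp_all add: UNIV_bool)
  ultimately show ?thesis
    by (rule finite_subset)
qed


section \<open>Exchanging and re-splitting forests\<close>

fun swap_pairs :: "'a list \<Rightarrow> 'a list" where
  "swap_pairs (a # b # xs) = b # a # swap_pairs xs"
| "swap_pairs xs = xs"

lemma swap_pairs_swap_pairs [simp]: "swap_pairs (swap_pairs xs) = xs"
  by (induction xs rule: swap_pairs.induct) auto

lemma length_swap_pairs [simp]: "length (swap_pairs xs) = length xs"
  by (induction xs rule: swap_pairs.induct) auto

lemma path_degs_swap_pairs: "even (length M) \<Longrightarrow> path_degs y (swap_pairs M) = path_degs (\<not> y) M"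
  by (induction M arbitrary: y rule: swap_pairs.induct) (auto simp: add_ac)

lemma mset_inner_seq_swap_pairs:
  "even (length M) \<Longrightarrow> mset (inner_seq y (swap_pairs M)) = mset (inner_seq (\<not> y) M)"
  by (induction M arbitrary: y rule: swap_pairs.induct) auto

lemma disorders_seq_inner_seq_swap_pairs:
  "even (length M) \<Longrightarrow> disorders_seq (inner_seq y (swap_pairs M)) = disorders_seq (inner_seq (\<not> y) M)"
proof (induction M arbitrary: y rule: swap_pairs.induct)
  case (1 a b M)
  then have "even (length M)"
    by simp
  then show ?case
    using "1.IH" count_below_mset[OF mset_inner_seq_swap_pairs] by (simp add: count_below_Cons)
qed auto

definition resplit :: "'a list \<Rightarrow> 'a list \<Rightarrow> 'a list \<times> 'a list" where
  "resplit a b = (take (length b) (a @ b), drop (length b) (a @ b))"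

lemma length_resplit [simp]:
  shows "length (fst (resplit a b)) = length b" and "length (snd (resplit a b)) = length a"
  by (simp_all add: resplit_def)

lemma resplit_append: "fst (resplit a b) @ snd (resplit a b) = a @ b"
  by (simp only: resplit_def fst_conv snd_conv append_take_drop_id)

lemma inner_degs_resplit:
  "inner_degs y (fst (resplit a b)) + inner_degs y (snd (resplit a b)) = inner_degs y a + inner_degs y b"
proof -
  have "forest_degs x (fst (resplit a b)) + forest_degs x (snd (resplit a b))
        = forest_degs x a + forest_degs x b" for x
    by (metis forest_degs_append resplit_append)
  then show ?thesis
    by (simp add: vertex_degs_def add_ac)
qed

fun resplit_first :: "('a list \<times> 'a list) list \<Rightarrow> ('a list \<times> 'a list) list" where
  "resplit_first [] = []"
| "resplit_first ((a, b) # ps) =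
     (if length a = length b then (a, b) # resplit_first ps else resplit a b # ps)"

definition balanced :: "('a list \<times> 'b list) list \<Rightarrow> bool" where
  "balanced ps \<longleftrightarrow> (\<forall>(a, b) \<in> set ps. length a = length b)"

lemma balanced_Nil [simp]: "balanced []"
  by (simp add: balanced_def)

lemma balanced_Cons [simp]: "balanced ((a, b) # ps) \<longleftrightarrow> length a = length b \<and> balanced ps"
  by (simp add: balanced_def)

lemma balanced_append [simp]: "balanced (ps @ qs) \<longleftrightarrow> balanced ps \<and> balanced qs"
  by (auto simp: balanced_def)

lemma length_resplit_first [simp]: "length (resplit_first ps) = length ps"
  by (induction ps rule: resplit_first.induct) auto

lemma length_resplit_eq:
  "resplit a b = (a', b') \<Longrightarrow> length a' = length b \<and> length b' = length a"
  by (metis fst_conv snd_conv length_resplit)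

lemma resplit_resplit:
  assumes "resplit a b = (a', b')"
  shows "resplit a' b' = (a, b)"
proof -
  have "a' @ b' = a @ b" and "length b' = length a"
    using resplit_append[of a b] length_resplit(2)[of a b] assms by simp_all
  then show ?thesis
    by (simp add: resplit_def)
qed

lemma resplit_first_resplit_first [simp]: "resplit_first (resplit_first ps) = ps"
proof (induction ps rule: resplit_first.induct)
  case (2 a b ps)
  obtain a' b' where r: "resplit a b = (a', b')"
    by fastforce
  then show ?case
    using 2 length_resplit_eq[OF r] resplit_resplit[OF r] by auto
qed simp

lemma balanced_resplit_first [simp]: "balanced (resplit_first ps) \<longleftrightarrow> balanced ps"
  by (induction ps rule: resplit_first.induct) (auto simp: resplit_def)

(* The members of a pair are placed two positions apart, hence get the same colour on the real
   path; the first pair is outermost and the middle vertex s comes last. *)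
fun lay_pairs :: "'a \<Rightarrow> ('a \<times> 'a) list \<Rightarrow> 'a list" where
  "lay_pairs s [] = [s]"
| "lay_pairs s [(a, b)] = [a, s, b]"
| "lay_pairs s ((a, b) # (c, d) # ps) = a # c # b # d # lay_pairs s ps"

fun unlay_pairs :: "'a list \<Rightarrow> 'a \<times> ('a \<times> 'a) list" where
  "unlay_pairs [s] = (s, [])"
| "unlay_pairs [a, s, b] = (s, [(a, b)])"
| "unlay_pairs (a # c # b # d # xs) = (let (s, ps) = unlay_pairs xs in (s, (a, b) # (c, d) # ps))"

lemma length_lay_pairs [simp]: "length (lay_pairs s ps) = 2 * length ps + 1"
  by (induction s ps rule: lay_pairs.induct) auto

lemma unlay_lay_pairs [simp]: "unlay_pairs (lay_pairs s ps) = (s, ps)"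
  by (induction s ps rule: lay_pairs.induct) auto

lemma lay_unlay_pairs: "odd (length xs) \<Longrightarrow> unlay_pairs xs = (s, ps) \<Longrightarrow> lay_pairs s ps = xs"
  by (induction xs arbitrary: s ps rule: unlay_pairs.induct) (auto split: prod.splits)

lemma odd_length_cases:
  assumes "odd (length xs)"
  obtains s ps where "xs = lay_pairs s ps"
  using assms lay_unlay_pairs by (metis surj_pair)

fun pairs_degs :: "bool \<Rightarrow> (ptree list \<times> ptree list) list \<Rightarrow> (bool \<times> nat) multiset" where
  "pairs_degs y [] = {#}"
| "pairs_degs y ((a, b) # ps) = inner_degs y a + inner_degs y b + pairs_degs (\<not> y) ps"

lemma path_degs_lay_pairs:
  "path_degs y (lay_pairs s ps) = pairs_degs y ps + inner_degs (if even (length ps) then y else \<not> y) s"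
  by (induction s ps arbitrary: y rule: lay_pairs.induct) (auto simp: add_ac)

lemma pairs_degs_resplit_first: "pairs_degs y (resplit_first ps) = pairs_degs y ps"
proof (induction ps arbitrary: y rule: resplit_first.induct)
  case (2 a b ps)
  obtain a' b' where r: "resplit a b = (a', b')"
    by fastforce
  show ?case
    using 2 inner_degs_resplit[of y a b, unfolded r fst_conv snd_conv] by (simp add: r add_ac)
qed simp

lemma parity_swapped_inner_seq_resplit_first:
  "\<not> balanced ps
   \<Longrightarrow> parity_swapped (inner_seq y (lay_pairs s (resplit_first ps))) (inner_seq y (lay_pairs s ps))"
proof (induction s ps rule: lay_pairs.induct)
  case (1 s)
  then show ?case
    by simp
next
  case (2 s a b)
  obtain a' b' where r: "resplit a b = (a', b')"
    by fastforce
  then show ?case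
    using 2 length_resplit_eq[OF r] parity_swapped_transpose[of "(y, 2 * length b + 2)" "(y, 2 * length a + 2)"]
    by simp
next
  case (3 s a b c d ps)
  let ?X = "inner_seq y (lay_pairs s ps)"
  consider (first) "length a \<noteq> length b"
    | (second) "length a = length b" "length c \<noteq> length d"
    | (rest) "length a = length b" "length c = length d"
    by blast
  then show ?case
  proof cases
    case first
    obtain a' b' where r: "resplit a b = (a', b')"
      by fastforce
    then show ?thesis
      using first length_resplit_eq[OF r] parity_swapped_transpose[of "(y, 2 * length b + 2)" "(y, 2 * length a + 2)"]
      by simp
  next
    case second
    obtain c' d' where r: "resplit c d = (c', d')"
      by fastforce
    then show ?thesis
      using second length_resplit_eq[OF r] parity_swapped_transpose[of "(\<not> y, 2 * length d + 2)" "(\<not> y, 2 * length c + 2)"]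
        parity_swapped_append_left[where zs = "[(y, 2 * length a + 2)]"]
      by simp
  next
    case rest
    then have "parity_swapped (inner_seq y (lay_pairs s (resplit_first ps))) ?X"
      using "3.IH" "3.prems" by simp
    then show ?thesis
      using rest parity_swapped_append_left[where zs = "[(y, 2 * length a + 2), (\<not> y, 2 * length c + 2),
          (y, 2 * length a + 2), (\<not> y, 2 * length c + 2)]"]
      by simp
  qed
qed

lemma even_disorders_seq_lay_pairs:
  "balanced ps \<Longrightarrow> even (disorders_seq (inner_seq y (lay_pairs s ps)))"
proof (induction s ps rule: lay_pairs.induct)
  case (3 s a b c d ps)
  let ?X = "inner_seq y (lay_pairs s ps)"
  have dl: "disorders_seq (inner_seq y (lay_pairs s ((a, b) # (c, d) # ps)))
        = 2 * (count_below (y, 2 * length a + 2) ?X + count_below (\<not> y, 2 * length c + 2) ?X)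
          + disorders_seq ?X"
    using "3.prems" by (simp add: count_below_Cons)
  show ?case
    unfolding dl using 3 by simp
qed (simp_all add: count_below_Cons)


section \<open>Folding a path into a one-vertex tree\<close>

(* The first (outermost) pair lies directly on the bottom node, so the root carries the pair
   next to s in lay_pairs: both have the colour opposite to the vertex carrying s. *)
fun stack_pairs :: "ptree \<Rightarrow> (ptree list \<times> ptree list) list \<Rightarrow> ptree" where
  "stack_pairs t [] = t"
| "stack_pairs t ((a, b) # ps) = stack_pairs (Node (t # a @ b)) ps"

definition halves :: "'a list \<Rightarrow> 'a list \<times> 'a list" where
  "halves xs = (take (length xs div 2) xs, drop (length xs div 2) xs)"

(* Stacked nodes have an odd number of children, the bottom node Node (f0 @ fl) an even number. *)
fun unstack_pairs :: "ptree \<Rightarrow> (ptree list \<times> ptree list) list \<times> ptree list \<times> ptree list" where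
  "unstack_pairs (Node []) = ([], [], [])"
| "unstack_pairs (Node (t # ts)) =
     (if odd (length ts) then ([], halves (t # ts))
      else let (ps, ab) = unstack_pairs t in (ps @ [halves ts], ab))"

lemma halves_append: "length a = length b \<Longrightarrow> halves (a @ b) = (a, b)"
  by (simp add: halves_def)

lemma stack_pairs_snoc: "stack_pairs t (ps @ [(a, b)]) = Node (stack_pairs t ps # a @ b)"
  by (induction t ps rule: stack_pairs.induct) auto

lemma unstack_stack_pairs:
  "balanced ps \<Longrightarrow> unstack_pairs (stack_pairs t ps) = (fst (unstack_pairs t) @ ps, snd (unstack_pairs t))"
  by (induction t ps rule: stack_pairs.induct) (auto simp: halves_append split: prod.splits)

lemma unstack_Node_append:
  assumes "length a = length b"
  shows "unstack_pairs (Node (a @ b)) = ([], a, b)"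
proof (cases "a @ b")
  case (Cons t ts)
  have "Suc (length ts) = 2 * length a"
    using assms arg_cong[OF Cons, of length] by simp
  then have "odd (length ts)"
    by presburger
  then show ?thesis
    using Cons halves_append[OF assms] by simp
qed (use assms in simp)

lemma stack_unstack_pairs:
  "unstack_pairs t = (ps, a, b) \<Longrightarrow> balanced ps \<and> length a = length b \<and> stack_pairs (Node (a @ b)) ps = t"
proof (induction t arbitrary: ps a b rule: unstack_pairs.induct)
  case 1
  then show ?case
    by simp
next
  case (2 t ts)
  show ?case
  proof (cases "odd (length ts)")
    case True
    then show ?thesis
      using "2.prems" by (auto simp: halves_def elim!: oddE)
  next
    case False
    then obtain ps' where t: "unstack_pairs t = (ps', a, b)" and ps: "ps = ps' @ [halves ts]"
      using "2.prems" by (auto split: prod.splits)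
    then show ?thesis
      using "2.IH"[OF False t] False by (auto simp: halves_def stack_pairs_snoc)
  qed
qed

lemma pdegs_stack_pairs:
  assumes "balanced ps" and "z = (if even (length ps) then \<not> y else y)"
  shows "pdegs y (stack_pairs t ps) + pdegs y (stack_pairs t ps)
         = pairs_degs z ps + pdegs (\<not> z) t + pdegs (\<not> z) t"
  using assms
proof (induction t ps arbitrary: z rule: stack_pairs.induct)
  case (2 t a b ps)
  let ?z = "if even (length ps) then \<not> y else y"
  have "pdegs y (stack_pairs t ((a, b) # ps)) + pdegs y (stack_pairs t ((a, b) # ps))
        = pairs_degs ?z ps + pdegs (\<not> ?z) (Node (t # a @ b)) + pdegs (\<not> ?z) (Node (t # a @ b))"
    using 2 by simp
  then show ?case
    using 2 by (simp add: pdegs_Node vertex_degs_def add_ac mult_2 del: pdegs.simps)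
qed simp

lemma pdegs_Node_append:
  "length a = length b \<Longrightarrow> pdegs c (Node (a @ b)) + pdegs c (Node (a @ b)) = end_degs c a + end_degs c b"
  by (simp add: pdegs_Node vertex_degs_def add_ac mult_2 del: pdegs.simps)

lemma all_degs_single_Cons: "all_degs (c, [t # s]) = inner_degs c s + pdegs (\<not> c) t + pdegs (\<not> c) t"
  unfolding all_degs_single by (simp add: vertex_degs_def add_ac del: pdegs.simps)


section \<open>The sign-reversing involution\<close>

definition weight :: "rtree \<Rightarrow> int" where
  "weight T = (if white_side T then tsign T else - tsign T)"

definition flip_path :: "bool \<Rightarrow> ptree list \<Rightarrow> ptree list list \<Rightarrow> ptree list \<Rightarrow> rtree" where
  "flip_path c f0 M fl =
     (if even (length M) then (\<not> c, fl # swap_pairs M @ [f0])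
      else if length f0 \<noteq> length fl then (c, fl # M @ [f0])
      else let (s, ps) = unlay_pairs M in
        if balanced ps then (if even (length ps) then \<not> c else c, [stack_pairs (Node (f0 @ fl)) ps # s])
        else (c, f0 # lay_pairs s (resplit_first ps) @ [fl]))"

definition unfold_vertex :: "bool \<Rightarrow> ptree \<Rightarrow> ptree list \<Rightarrow> rtree" where
  "unfold_vertex c t s =
     (let (ps, f0, fl) = unstack_pairs t in (if even (length ps) then \<not> c else c, f0 # lay_pairs s ps @ [fl]))"

fun flip :: "rtree \<Rightarrow> rtree" where
  "flip (c, [t # s]) = unfold_vertex c t s"
| "flip (c, f0 # f1 # vs) = flip_path c f0 (butlast (f1 # vs)) (last (f1 # vs))"
| "flip T = T"

lemma flip_eq_flip_path: "flip (c, f0 # M @ [fl]) = flip_path c f0 M fl"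
proof -
  obtain f1 vs where path: "M @ [fl] = f1 # vs"
    by (cases "M @ [fl]") auto
  have "butlast (f1 # vs) = M" and "last (f1 # vs) = fl"
    by (simp_all flip: path)
  then show ?thesis
    unfolding path by simp
qed

lemma minus_one_power_eq_if_even_add: "even (a + b) \<Longrightarrow> (-1 :: int) ^ a = (-1) ^ b"
  by (auto simp: minus_one_power_iff)

lemma minus_one_power_eq_neg_if_odd_add: "odd (a + b) \<Longrightarrow> (-1 :: int) ^ a = - ((-1) ^ b)"
  by (auto simp: minus_one_power_iff)

lemma weight_neq_0: "weight T \<noteq> 0"
  by (simp add: weight_def tsign_def)

lemma weight_neg_same_side:
  "white_side T' = white_side T \<Longrightarrow> tsign T' = - tsign T \<Longrightarrow> weight T' = - weight T"
  by (simp add: weight_def)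

lemma weight_neg_other_side:
  "white_side T' \<noteq> white_side T \<Longrightarrow> tsign T' = tsign T \<Longrightarrow> weight T' = - weight T"
  by (simp add: weight_def)

lemma exchange_ends_even:
  assumes "even (length M)"
  shows "all_degs (\<not> c, fl # swap_pairs M @ [f0]) = all_degs (c, f0 # M @ [fl])"
    and "weight (\<not> c, fl # swap_pairs M @ [f0]) = - weight (c, f0 # M @ [fl])"
proof -
  have col: "rcol c (Suc (length M)) = (\<not> c)" "rcol (\<not> c) (Suc (length M)) = c"
    using assms by (simp_all add: rcol_def)
  show "all_degs (\<not> c, fl # swap_pairs M @ [f0]) = all_degs (c, f0 # M @ [fl])"
    by (simp add: all_degs_path col path_degs_swap_pairs[OF assms] add_ac)
  let ?p = "(c, 2 * length f0 + 1)" and ?q = "(\<not> c, 2 * length fl + 1)"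
  let ?D = "inner_seq (\<not> c) M" and ?D' = "inner_seq c (swap_pairs M)"
  have seq: "real_seq (\<not> c, fl # swap_pairs M @ [f0]) = ?q # ?D' @ [?p]"
    "real_seq (c, f0 # M @ [fl]) = ?p # ?D @ [?q]"
    by (simp_all add: real_seq_path col)
  have "disorders_seq (?q # ?D' @ [?p]) = disorders_seq (?q # ?D @ [?p])"
    using disorders_seq_inner_seq_swap_pairs[OF assms, of c] mset_inner_seq_swap_pairs[OF assms, of c]
    by (intro disorders_seq_Cons_snoc_cong) simp_all
  moreover have "even (disorders_seq (?p # ?D @ [?q]) + disorders_seq (?q # ?D @ [?p]) + length ?D)"
    by (rule disorders_seq_swap_ends_other_colour) (auto dest: even_inner_seq)
  ultimately have "even (disorders_seq (real_seq (\<not> c, fl # swap_pairs M @ [f0]))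
                     + disorders_seq (real_seq (c, f0 # M @ [fl])))"
    using assms length_inner_seq[of "\<not> c" M] unfolding seq by presburger
  then have "tsign (\<not> c, fl # swap_pairs M @ [f0]) = tsign (c, f0 # M @ [fl])"
    unfolding tsign_eq by (rule minus_one_power_eq_if_even_add)
  then show "weight (\<not> c, fl # swap_pairs M @ [f0]) = - weight (c, f0 # M @ [fl])"
    by (rule weight_neg_other_side[rotated]) (simp add: col)
qed

lemma exchange_ends_odd:
  assumes "odd (length M)" and "length f0 \<noteq> length fl"
  shows "all_degs (c, fl # M @ [f0]) = all_degs (c, f0 # M @ [fl])"
    and "weight (c, fl # M @ [f0]) = - weight (c, f0 # M @ [fl])"
proof -
  have col: "rcol c (Suc (length M)) = c"
    using assms by (simp add: rcol_def)
  show "all_degs (c, fl # M @ [f0]) = all_degs (c, f0 # M @ [fl])"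
    by (simp add: all_degs_path col add_ac)
  let ?p = "(c, 2 * length f0 + 1)" and ?q = "(c, 2 * length fl + 1)"
  let ?D = "inner_seq (\<not> c) M"
  have "odd (disorders_seq (?p # ?D @ [?q]) + disorders_seq (?q # ?D @ [?p]))"
    using assms(2) by (intro disorders_seq_swap_ends_same_colour) (auto dest: even_inner_seq)
  then have "tsign (c, fl # M @ [f0]) = - tsign (c, f0 # M @ [fl])"
    by (simp add: tsign_eq real_seq_path col minus_one_power_eq_neg_if_odd_add add.commute)
  then show "weight (c, fl # M @ [f0]) = - weight (c, f0 # M @ [fl])"
    by (rule weight_neg_same_side[rotated]) simp
qed

lemma resplit_inner_forests:
  assumes "\<not> balanced ps"
  shows "all_degs (c, f0 # lay_pairs s (resplit_first ps) @ [fl]) = all_degs (c, f0 # lay_pairs s ps @ [fl])"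
    and "weight (c, f0 # lay_pairs s (resplit_first ps) @ [fl]) = - weight (c, f0 # lay_pairs s ps @ [fl])"
proof -
  show "all_degs (c, f0 # lay_pairs s (resplit_first ps) @ [fl]) = all_degs (c, f0 # lay_pairs s ps @ [fl])"
    by (simp add: all_degs_path path_degs_lay_pairs pairs_degs_resplit_first)
  let ?p = "(c, 2 * length f0 + 1)" and ?q = "(rcol c (Suc (length (lay_pairs s ps))), 2 * length fl + 1)"
  have "parity_swapped ([?p] @ inner_seq (\<not> c) (lay_pairs s (resplit_first ps)) @ [?q])
          ([?p] @ inner_seq (\<not> c) (lay_pairs s ps) @ [?q])"
    using parity_swapped_inner_seq_resplit_first[OF assms]
    by (intro parity_swapped_append_left parity_swapped_append_right)
  then have "tsign (c, f0 # lay_pairs s (resplit_first ps) @ [fl]) = - tsign (c, f0 # lay_pairs s ps @ [fl])"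
    by (simp add: tsign_eq real_seq_path parity_swapped_def minus_one_power_eq_neg_if_odd_add)
  then show "weight (c, f0 # lay_pairs s (resplit_first ps) @ [fl]) = - weight (c, f0 # lay_pairs s ps @ [fl])"
    by (rule weight_neg_same_side[rotated]) simp
qed

lemma tsign_balanced_path:
  assumes "balanced ps" and "length f0 = length fl"
  shows "tsign (c, f0 # lay_pairs s ps @ [fl]) = (-1) ^ length ps"
proof -
  have col: "rcol c (Suc (length (lay_pairs s ps))) = c"
    by (simp add: rcol_def)
  let ?E = "(c, 2 * length f0 + 1)" and ?D = "inner_seq (\<not> c) (lay_pairs s ps)"
  (* Each inner vertex of the colour of the ends is in a disorder with exactly one of the two ends,
     which have the same odd degree. *)
  have "count_below ?E ?D + cross_disorders ?D [?E] = length (filter (\<lambda>z. fst z = fst ?E) ?D)"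
    by (rule count_below_add_cross_disorders) (auto dest: even_inner_seq)
  also have "\<dots> = length ps"
    by (simp add: length_filter_inner_seq)
  finally have "count_below ?E ?D + cross_disorders ?D [?E] = length ps" .
  then have "disorders_seq (real_seq (c, f0 # lay_pairs s ps @ [fl])) = length ps + disorders_seq ?D"
    using assms(2) unfolding real_seq_path col disorders_seq_Cons_snoc by (simp add: count_below_Cons)
  moreover have "even (disorders_seq ?D)"
    by (rule even_disorders_seq_lay_pairs[OF assms(1)])
  ultimately have "even (disorders_seq (real_seq (c, f0 # lay_pairs s ps @ [fl])) + length ps)"
    by simp
  then show "tsign (c, f0 # lay_pairs s ps @ [fl]) = (-1) ^ length ps"
    unfolding tsign_eq by (rule minus_one_power_eq_if_even_add)
qed

lemma fold_to_vertex:
  assumes "balanced ps" and "length f0 = length fl"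
    and c': "c' = (if even (length ps) then \<not> c else c)"
  shows "all_degs (c', [stack_pairs (Node (f0 @ fl)) ps # s]) = all_degs (c, f0 # lay_pairs s ps @ [fl])"
    and "weight (c', [stack_pairs (Node (f0 @ fl)) ps # s]) = - weight (c, f0 # lay_pairs s ps @ [fl])"
proof -
  have col: "rcol c (Suc (length (lay_pairs s ps))) = c"
    by (simp add: rcol_def)
  have "pdegs (\<not> c') (stack_pairs (Node (f0 @ fl)) ps) + pdegs (\<not> c') (stack_pairs (Node (f0 @ fl)) ps)
        = pairs_degs (\<not> c) ps + end_degs c f0 + end_degs c fl"
    using pdegs_stack_pairs[OF assms(1), of "\<not> c" "\<not> c'"] pdegs_Node_append[OF assms(2), of c] c'
    by (simp add: add_ac)
  then show "all_degs (c', [stack_pairs (Node (f0 @ fl)) ps # s]) = all_degs (c, f0 # lay_pairs s ps @ [fl])"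
    using assms(2) c' by (auto simp: all_degs_single_Cons all_degs_path path_degs_lay_pairs rcol_def add_ac
        split: if_splits)
  have sign: "tsign (c, f0 # lay_pairs s ps @ [fl]) = (-1) ^ length ps"
    using assms(1,2) by (rule tsign_balanced_path)
  have sign': "tsign (c', [stack_pairs (Node (f0 @ fl)) ps # s]) = 1"
    by (simp add: tsign_eq real_seq_single)
  have side: "white_side (c, f0 # lay_pairs s ps @ [fl]) = c"
    using col by simp
  show "weight (c', [stack_pairs (Node (f0 @ fl)) ps # s]) = - weight (c, f0 # lay_pairs s ps @ [fl])"
  proof (cases "even (length ps)")
    case True
    then show ?thesis
      using sign sign' side c' by (intro weight_neg_other_side) simp_all
  next
    case False
    then show ?thesis
      using sign sign' side c' by (intro weight_neg_same_side) simp_all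
  qed
qed

lemma flip_path_cases:
  obtains (even) "even (length M)" and "flip_path c f0 M fl = (\<not> c, fl # swap_pairs M @ [f0])"
  | (exchange_ends) "odd (length M)" and "length f0 \<noteq> length fl"
    and "flip_path c f0 M fl = (c, fl # M @ [f0])"
  | (resplit) s ps where "M = lay_pairs s ps" and "length f0 = length fl" and "\<not> balanced ps"
    and "flip_path c f0 M fl = (c, f0 # lay_pairs s (resplit_first ps) @ [fl])"
  | (fold) s ps where "M = lay_pairs s ps" and "length f0 = length fl" and "balanced ps"
    and "flip_path c f0 M fl
         = (if even (length ps) then \<not> c else c, [stack_pairs (Node (f0 @ fl)) ps # s])"
proof (cases "even (length M)")
  case True
  then show thesis
    using even by (simp add: flip_path_def)
next
  case odd: False
  then obtain s ps where M: "M = lay_pairs s ps"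
    by (rule odd_length_cases)
  consider "length f0 \<noteq> length fl" | "length f0 = length fl" "\<not> balanced ps"
    | "length f0 = length fl" "balanced ps"
    by blast
  then show thesis
  proof cases
    case 1
    then show thesis
      using odd exchange_ends by (simp add: flip_path_def)
  next
    case 2
    then show thesis
      using resplit[OF M] by (simp add: flip_path_def M)
  next
    case 3
    then show thesis
      using fold[OF M] by (simp add: flip_path_def M)
  qed
qed

lemma flip_path_sign_reversing:
  "all_degs (flip_path c f0 M fl) = all_degs (c, f0 # M @ [fl])
   \<and> weight (flip_path c f0 M fl) = - weight (c, f0 # M @ [fl])"
proof (cases rule: flip_path_cases[of M c f0 fl])
  case even
  then show ?thesis
    using exchange_ends_even[OF even(1), of c fl f0] by simp
next
  case exchange_ends
  then show ?thesis
    using exchange_ends_odd[OF exchange_ends(1,2), of c] by simp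
next
  case (resplit s ps)
  then show ?thesis
    using resplit_inner_forests[OF resplit(3), of c f0 s fl] by simp
next
  case (fold s ps)
  then show ?thesis
    using fold_to_vertex[OF fold(3,2) refl, of c s] by simp
qed

lemma flip_flip_path: "flip (flip_path c f0 M fl) = (c, f0 # M @ [fl])"
proof (cases rule: flip_path_cases[of M c f0 fl])
  case even
  then show ?thesis
    by (simp add: flip_eq_flip_path flip_path_def)
next
  case exchange_ends
  then show ?thesis
    by (simp add: flip_eq_flip_path flip_path_def)
next
  case (resplit s ps)
  then show ?thesis
    by (simp add: flip_eq_flip_path flip_path_def)
next
  case (fold s ps)
  then show ?thesis
    by (simp add: unfold_vertex_def unstack_stack_pairs unstack_Node_append)
qed

lemma flip_flip_single: "flip (flip (c, [t # s])) = (c, [t # s])"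
proof -
  obtain ps f0 fl where u: "unstack_pairs t = (ps, f0, fl)"
    by (cases "unstack_pairs t")
  then have "balanced ps" "length f0 = length fl" "stack_pairs (Node (f0 @ fl)) ps = t"
    using stack_unstack_pairs by blast+
  then show ?thesis
    by (simp add: unfold_vertex_def u flip_eq_flip_path flip_path_def)
qed

lemma rtree_cases:
  obtains (no_vertex) c where "T = (c, [])"
  | (no_edge) c where "T = (c, [[]])"
  | (single) c t s where "T = (c, [t # s])"
  | (path) c f0 M fl where "T = (c, f0 # M @ [fl])"
proof -
  obtain c vs where T: "T = (c, vs)"
    by fastforce
  show thesis
  proof (cases vs)
    case Nil
    then show thesis
      using T no_vertex by simp
  next
    case (Cons f0 us)
    show thesis
    proof (cases us rule: rev_cases)
      case Nil
      then show thesis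
        using T Cons no_edge single by (cases f0) auto
    next
      case (snoc M fl)
      then show thesis
        using T Cons path by simp
    qed
  qed
qed

lemma flip_sign_reversing:
  assumes "rt_valid T" and "snd T \<noteq> [[]]"
  shows "flip (flip T) = T \<and> all_degs (flip T) = all_degs T \<and> weight (flip T) = - weight T"
proof (cases T rule: rtree_cases)
  case (single c t s)
  obtain ps f0 fl where "unstack_pairs t = (ps, f0, fl)"
    by (cases "unstack_pairs t")
  then obtain c' M where P: "flip T = (c', f0 # M @ [fl])"
    using single by (simp add: unfold_vertex_def)
  have "flip (flip T) = T"
    using single flip_flip_single by simp
  moreover from this have "all_degs T = all_degs (flip T) \<and> weight T = - weight (flip T)"
    using flip_path_sign_reversing[of c' f0 M fl] by (simp add: P flip_eq_flip_path)
  ultimately show ?thesis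
    by simp
next
  case (path c f0 M fl)
  then show ?thesis
    by (simp add: flip_eq_flip_path flip_flip_path flip_path_sign_reversing)
qed (use assms in simp_all)

lemma sum_mset_white_degs_no_edge: "sum_mset (white_degs (c, [[]])) = 0"
  by (simp add: white_degs_def all_degs_single vertex_degs_def)

lemma sum_weight_eq_0:
  assumes "sum_mset Lw \<noteq> 0"
  shows "(\<Sum>T | rt_valid T \<and> white_degs T = Lw \<and> black_degs T = Lb. weight T) = 0"
proof (rule sum_involution_eq_0[where h = flip])
  fix T
  assume "T \<in> {T. rt_valid T \<and> white_degs T = Lw \<and> black_degs T = Lb}"
  then have T: "rt_valid T" "white_degs T = Lw" "black_degs T = Lb"
    by simp_all
  moreover have "snd T \<noteq> [[]]"
    using T(2) assms sum_mset_white_degs_no_edge by (metis prod.collapse)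
  ultimately have flip: "flip (flip T) = T" "all_degs (flip T) = all_degs T" "weight (flip T) = - weight T"
    using flip_sign_reversing by blast+
  show "weight (flip T) + weight T = 0"
    using flip(3) by simp
  show "flip T \<in> {T. rt_valid T \<and> white_degs T = Lw \<and> black_degs T = Lb}"
    using T flip(2) by (simp add: rt_valid_iff_all_degs white_degs_def black_degs_def)
  show "flip (flip T) = T"
    by (rule flip(1))
  show "flip T \<noteq> T"
    using flip(3) weight_neq_0[of T] by auto
qed

theorem theorem3p9:
  fixes n :: nat and Lw Lb :: "nat multiset"
  assumes "0 < n"
    and "\<forall>x\<in>#Lw. 0 < x" and "sum_mset Lw = n"
    and "\<forall>x\<in>#Lb. 0 < x" and "sum_mset Lb = n"
  shows "(\<Sum>T\<in>Wtrees Lw Lb. tsign T) - (\<Sum>T\<in>Btrees Lw Lb. tsign T) = 0"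
proof -
  let ?S = "{T. rt_valid T \<and> white_degs T = Lw \<and> black_degs T = Lb}"
  have "finite ?S"
    using finite_trees_with_degrees[of Lw Lb] by (rule finite_subset[rotated]) auto
  then have "(\<Sum>T\<in>?S. weight T) = (\<Sum>T\<in>Wtrees Lw Lb. tsign T) - (\<Sum>T\<in>Btrees Lw Lb. tsign T)"
    unfolding weight_def by (simp add: sum.If_cases sum_negf Wtrees_def Btrees_def Int_def conj_ac)
  moreover have "(\<Sum>T\<in>?S. weight T) = 0"
    using assms(1,3) by (intro sum_weight_eq_0) simp
  ultimately show ?thesis
    by simp
qed

end
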